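(* For every $n\ge 0$, $$B(2n,0)=\sum_{\lambda\in\Lambda_n}\prod_{i=1}^n\lambda_i^2 .$$
   Context: A labeled ballot path is a lattice path from $(0,0)$ with steps $u=(1,1)$, $d=(1,-1)$ never going below the $x$-axis, each step carrying an integer label between $0$ and its height, where the height of a step is the smaller $y$-coordinate of its endpoints. $B(n,k)$ is the number of labeled ballot paths ending at $(n,k)$; thus $B(2n,0)$ counts labeled Dyck paths of length $2n$. $\Lambda_n$ is the set of integer sequences $\lambda_1\cdots\lambda_n$ with $\lambda_1=1$ and $1\le\lambda_j\le\lambda_{j-1}+1$ for $2\le j\le n$. *)

theory Defs
  imports Main
begin

text \<open>A step sequence is a list of booleans: True = up step u=(1,1), False = down step d=(1,-1).\<close>

definition step_val :: "bool \<Rightarrow> int" where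
  "step_val b = (if b then 1 else -1)"

definition hgt :: "bool list \<Rightarrow> nat \<Rightarrow> int" where
  "hgt s j = (\<Sum>i<j. step_val (s ! i))"

definition step_height :: "bool list \<Rightarrow> nat \<Rightarrow> int" where
  "step_height s i = min (hgt s i) (hgt s (Suc i))"

definition ballot :: "bool list \<Rightarrow> bool" where
  "ballot s \<longleftrightarrow> (\<forall>j\<le>length s. hgt s j \<ge> 0)"

definition labeled_ballot_paths :: "nat \<Rightarrow> int \<Rightarrow> (bool list \<times> nat list) set" where
  "labeled_ballot_paths n k = {(s, l). length s = n \<and> length l = n \<and> ballot s \<and>
      hgt s n = k \<and> (\<forall>i<n. int (l ! i) \<le> step_height s i)}"

definition B :: "nat \<Rightarrow> int \<Rightarrow> nat" where
  "B n k = card (labeled_ballot_paths n k)"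

text \<open>\<Lambda>_n as lists (index j of the list is \<lambda>_{j+1}).\<close>
definition Lambda :: "nat \<Rightarrow> nat list set" where
  "Lambda n = {xs. length xs = n \<and> (n \<ge> 1 \<longrightarrow> xs ! 0 = 1) \<and>
      (\<forall>j. 1 \<le> j \<and> j < n \<longrightarrow> 1 \<le> xs ! j \<and> xs ! j \<le> xs ! (j - 1) + 1)}"

end

theory Submission
  imports Defs
begin

(*
  Let b(m,k) be the number of labeled ballot paths of length m ending at height k.
  Classifying such a path by its last step gives the recurrence
      b(m+1,k) = k * b(m,k-1) + (k+1) * b(m,k+1),
  because an up step ending at height k has height k-1 (k possible labels) and a
  down step ending at height k has height k (k+1 possible labels).  This recurrence
  is solved along the diagonals m = 2n + h:
      b(2n+h, h) = h! * W(n,h),   W(0,h) = 1,   W(n+1,h) = sum_{j=1}^{h+1} j^2 * W(n,j),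
  by induction on n and, inside, on h.  Unfolding W shows that W(n,h) is the sum of
  prod_i lambda_i^2 over all sequences of length n that start at most at h+1, never
  drop below 1, and rise by at most 1 per position.  For h = 0 these sequences are
  exactly Lambda_n, and b(2n,0) = B(2n,0), which is the theorem.
*)

fun ballot_count :: "nat \<Rightarrow> nat \<Rightarrow> nat" where
  "ballot_count 0 k = (if k = 0 then 1 else 0)"
| "ballot_count (Suc m) k = k * ballot_count m (k - 1) + (k + 1) * ballot_count m (k + 1)"

fun lambda_weight :: "nat \<Rightarrow> nat \<Rightarrow> nat" where
  "lambda_weight 0 h = 1"
| "lambda_weight (Suc n) h = (\<Sum>j=1..h + 1. j\<^sup>2 * lambda_weight n j)"

lemma ballot_count_above: "m < k \<Longrightarrow> ballot_count m k = 0"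
  by (induction m arbitrary: k) auto

text \<open>Paths going straight up: only the up-step term survives, giving h!.\<close>
lemma ballot_count_diag: "ballot_count h h = fact h"
  by (induction h) (simp_all add: ballot_count_above)

lemma lambda_weight_Suc_Suc:
  "lambda_weight (Suc n) (Suc h) = lambda_weight (Suc n) h + (h + 2)\<^sup>2 * lambda_weight n (h + 2)"
  by (simp add: sum.cl_ivl_Suc)

lemma ballot_count_closed_form: "ballot_count (2 * n + h) h = fact h * lambda_weight n h"
proof (induction n arbitrary: h)
  case 0
  then show ?case by (simp add: ballot_count_diag)
next
  case (Suc n)
  note closed_form_n = Suc.IH
  show ?case
  proof (induction h)
    case 0
    have "ballot_count (2 * Suc n + 0) 0 = ballot_count (2 * n + 1) 1"
      by (simp add: numeral_2_eq_2)
    then show ?case using closed_form_n[of 1] by simp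
  next
    case (Suc h)
    have "ballot_count (2 * Suc n + Suc h) (Suc h)
        = Suc h * ballot_count (2 * Suc n + h) h + (h + 2) * ballot_count (2 * n + (h + 2)) (h + 2)"
      by (simp add: algebra_simps)
    also have "\<dots> = Suc h * (fact h * lambda_weight (Suc n) h)
        + (h + 2) * (fact (h + 2) * lambda_weight n (h + 2))"
      using Suc.IH closed_form_n[of "h + 2"] by simp
    also have "\<dots> = fact (Suc h) * lambda_weight (Suc n) (Suc h)"
      by (simp add: lambda_weight_Suc_Suc power2_eq_square algebra_simps)
    finally show ?case .
  qed
qed

definition lambda_seqs :: "nat \<Rightarrow> nat \<Rightarrow> nat list set" where
  "lambda_seqs n h = {xs. length xs = n \<and>
     (\<forall>j<n. 1 \<le> xs ! j \<and> xs ! j \<le> (if j = 0 then h else xs ! (j - 1)) + 1)}"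

lemma Cons_mem_lambda_seqs:
  "j # ys \<in> lambda_seqs (Suc n) h \<longleftrightarrow> j \<in> {1..h + 1} \<and> ys \<in> lambda_seqs n j"
proof -
  have "(\<forall>i<n. 1 \<le> ys ! i \<and> ys ! i \<le> (if Suc i = 0 then h else (j # ys) ! (Suc i - 1)) + 1)
     \<longleftrightarrow> (\<forall>i<n. 1 \<le> ys ! i \<and> ys ! i \<le> (if i = 0 then j else ys ! (i - 1)) + 1)"
    by (intro all_cong) (auto split: nat.split)
  then show ?thesis
    unfolding lambda_seqs_def mem_Collect_eq All_less_Suc2 by auto
qed

lemma lambda_seqs_0: "lambda_seqs 0 h = {[]}"
  unfolding lambda_seqs_def by auto

lemma lambda_seqs_Suc:
  "lambda_seqs (Suc n) h = (\<lambda>(j, ys). j # ys) ` (SIGMA j:{1..h + 1}. lambda_seqs n j)"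
proof (intro set_eqI iffI)
  fix xs assume "xs \<in> lambda_seqs (Suc n) h"
  moreover then obtain j ys where "xs = j # ys"
    unfolding lambda_seqs_def by (cases xs) auto
  ultimately show "xs \<in> (\<lambda>(j, ys). j # ys) ` (SIGMA j:{1..h + 1}. lambda_seqs n j)"
    using Cons_mem_lambda_seqs by blast
qed (auto simp: Cons_mem_lambda_seqs)

lemma finite_lambda_seqs: "finite (lambda_seqs n h)"
  by (induction n arbitrary: h) (simp_all add: lambda_seqs_0 lambda_seqs_Suc)

lemma sum_lambda_seqs: "(\<Sum>xs\<in>lambda_seqs n h. \<Prod>i<n. (xs ! i)\<^sup>2) = lambda_weight n h"
proof (induction n arbitrary: h)
  case 0
  then show ?case by (simp add: lambda_seqs_0)
next
  case (Suc n)
  have inj: "inj_on (\<lambda>(j, ys). j # ys) (SIGMA j:{1..h + 1}. lambda_seqs n j)"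
    by (auto simp: inj_on_def)
  have "(\<Sum>xs\<in>lambda_seqs (Suc n) h. \<Prod>i<Suc n. (xs ! i)\<^sup>2)
      = (\<Sum>(j, ys)\<in>(SIGMA j:{1..h + 1}. lambda_seqs n j). \<Prod>i<Suc n. ((j # ys) ! i)\<^sup>2)"
    unfolding lambda_seqs_Suc sum.reindex[OF inj] by (simp add: case_prod_unfold)
  also have "\<dots> = (\<Sum>j=1..h + 1. \<Sum>ys\<in>lambda_seqs n j. j\<^sup>2 * (\<Prod>i<n. (ys ! i)\<^sup>2))"
    unfolding prod.lessThan_Suc_shift nth_Cons_0 nth_Cons_Suc
    by (simp add: sum.Sigma[symmetric] finite_lambda_seqs)
  also have "\<dots> = lambda_weight (Suc n) h"
    by (simp add: sum_distrib_left[symmetric] Suc.IH)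
  finally show ?case .
qed

lemma Lambda_eq_lambda_seqs: "Lambda n = lambda_seqs n 0"
proof -
  have split_first: "(\<forall>j<n. P j) \<longleftrightarrow> (n \<ge> 1 \<longrightarrow> P 0) \<and> (\<forall>j. 1 \<le> j \<and> j < n \<longrightarrow> P j)"
    for P :: "nat \<Rightarrow> bool"
    by (metis less_one not_le not_less_zero nat_less_le le_trans)
  show ?thesis
    unfolding Lambda_def lambda_seqs_def split_first by auto
qed

lemma hgt_append: "j \<le> length s \<Longrightarrow> hgt (s @ t) j = hgt s j"
  unfolding hgt_def by (intro sum.cong refl) (simp add: nth_append)

lemma hgt_snoc: "hgt (s @ [x]) (Suc (length s)) = hgt s (length s) + step_val x"
  unfolding hgt_def by (simp add: nth_append)

lemma step_height_append: "i < length s \<Longrightarrow> step_height (s @ t) i = step_height s i"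
  unfolding step_height_def by (simp add: hgt_append)

lemma step_height_snoc:
  "step_height (s @ [x]) (length s) = min (hgt s (length s)) (hgt s (length s) + step_val x)"
  unfolding step_height_def by (simp add: hgt_append hgt_snoc)

lemma ballot_snoc: "ballot (s @ [x]) \<longleftrightarrow> ballot s \<and> 0 \<le> hgt s (length s) + step_val x"
proof -
  have "(\<forall>j\<le>Suc (length s). 0 \<le> hgt (s @ [x]) j)
      \<longleftrightarrow> (\<forall>j\<le>length s. 0 \<le> hgt s j) \<and> 0 \<le> hgt s (length s) + step_val x"
    by (auto simp: le_Suc_eq hgt_append hgt_snoc)
  then show ?thesis unfolding ballot_def by simp
qed

lemma snoc_mem_labeled_ballot_paths:
  assumes "length s = m" "length l = m"
  shows "(s @ [x], l @ [y]) \<in> labeled_ballot_paths (Suc m) k \<longleftrightarrow>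
    (s, l) \<in> labeled_ballot_paths m (k - step_val x) \<and> 0 \<le> k \<and> int y \<le> min (k - step_val x) k"
proof -
  have labels: "(\<forall>i<Suc m. int ((l @ [y]) ! i) \<le> step_height (s @ [x]) i) \<longleftrightarrow>
      (\<forall>i<m. int (l ! i) \<le> step_height s i) \<and> int y \<le> step_height (s @ [x]) m"
    using assms by (auto simp: nth_append step_height_append less_Suc_eq)
  show ?thesis
    unfolding labeled_ballot_paths_def mem_Collect_eq case_prod_conv labels
    using assms step_height_snoc[of s x] hgt_snoc[of s x] ballot_snoc[of s x] by auto
qed

lemma labeled_ballot_paths_0: "labeled_ballot_paths 0 k = (if k = 0 then {([], [])} else {})"
  unfolding labeled_ballot_paths_def ballot_def by (auto simp: hgt_def)

lemma labeled_ballot_paths_negative: "k < 0 \<Longrightarrow> labeled_ballot_paths m k = {}"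
  unfolding labeled_ballot_paths_def ballot_def by force

lemma labeled_ballot_paths_Suc:
  "labeled_ballot_paths (Suc m) (int k) =
     (\<lambda>((s, l), y). (s @ [True], l @ [y])) ` (labeled_ballot_paths m (int k - 1) \<times> {..<k}) \<union>
     (\<lambda>((s, l), y). (s @ [False], l @ [y])) ` (labeled_ballot_paths m (int k + 1) \<times> {..k})"
    (is "?P = ?Up \<union> ?Down")
proof (intro set_eqI iffI)
  fix p assume p: "p \<in> ?P"
  then have "length (fst p) = Suc m" "length (snd p) = Suc m"
    unfolding labeled_ballot_paths_def by auto
  then obtain s x l y where p_eq: "p = (s @ [x], l @ [y])" and len: "length s = m" "length l = m"
    by (metis length_Suc_conv_rev prod.collapse)
  have "(s, l) \<in> labeled_ballot_paths m (int k - step_val x) \<and> int y \<le> min (int k - step_val x) (int k)"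
    using p unfolding p_eq snoc_mem_labeled_ballot_paths[OF len] by simp
  then show "p \<in> ?Up \<union> ?Down"
    unfolding p_eq by (cases x) (force simp: step_val_def)+
next
  fix p assume "p \<in> ?Up \<union> ?Down"
  then obtain s l y x where p_eq: "p = (s @ [x], l @ [y])" and last_step:
    "(x \<and> (s, l) \<in> labeled_ballot_paths m (int k - 1) \<and> y < k) \<or>
     (\<not> x \<and> (s, l) \<in> labeled_ballot_paths m (int k + 1) \<and> y \<le> k)"
    by force
  then have len: "length s = m" "length l = m"
    unfolding labeled_ballot_paths_def by auto
  show "p \<in> ?P"
    unfolding p_eq snoc_mem_labeled_ballot_paths[OF len] using last_step by (auto simp: step_val_def)
qed

lemma finite_labeled_ballot_paths: "finite (labeled_ballot_paths m k)"
proof (induction m arbitrary: k)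
  case 0
  then show ?case by (simp add: labeled_ballot_paths_0)
next
  case (Suc m)
  show ?case
  proof (cases "k < 0")
    case True
    then show ?thesis by (simp add: labeled_ballot_paths_negative)
  next
    case False
    then obtain k' where "k = int k'" by (metis nonneg_eq_int not_less)
    then show ?thesis by (simp add: labeled_ballot_paths_Suc Suc.IH)
  qed
qed

lemma card_labeled_ballot_paths: "card (labeled_ballot_paths m (int k)) = ballot_count m k"
proof (induction m arbitrary: k)
  case 0
  then show ?case by (simp add: labeled_ballot_paths_0)
next
  case (Suc m)
  let ?Up = "(\<lambda>((s, l), y). (s @ [True], l @ [y])) ` (labeled_ballot_paths m (int k - 1) \<times> {..<k})"
  let ?Down = "(\<lambda>((s, l), y). (s @ [False], l @ [y])) ` (labeled_ballot_paths m (int k + 1) \<times> {..k})"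
  have card_up: "card ?Up = k * ballot_count m (k - 1)"
  proof -
    have "card ?Up = card (labeled_ballot_paths m (int k - 1)) * k"
      by (subst card_image) (auto simp: inj_on_def card_cartesian_product)
    moreover have "card (labeled_ballot_paths m (int k - 1)) = ballot_count m (k - 1)" if "k > 0"
      using Suc.IH[of "k - 1"] that by (simp add: of_nat_diff)
    ultimately show ?thesis by (cases "k = 0") simp_all
  qed
  have card_down: "card ?Down = (k + 1) * ballot_count m (k + 1)"
    using Suc.IH[of "k + 1"]
    by (subst card_image) (auto simp: inj_on_def card_cartesian_product add.commute)
  have "card (labeled_ballot_paths (Suc m) (int k)) = card ?Up + card ?Down"
    unfolding labeled_ballot_paths_Suc
    by (rule card_Un_disjoint) (auto simp: finite_labeled_ballot_paths)
  then show ?case using card_up card_down by simp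
qed

theorem corollary4p3:
  fixes n :: nat
  shows "B (2 * n) 0 = (\<Sum>xs\<in>Lambda n. \<Prod>i<n. (xs ! i) ^ 2)"
proof -
  have "B (2 * n) 0 = ballot_count (2 * n + 0) 0"
    using card_labeled_ballot_paths[of "2 * n" 0] unfolding B_def by simp
  also have "\<dots> = lambda_weight n 0"
    by (simp only: ballot_count_closed_form) simp
  also have "\<dots> = (\<Sum>xs\<in>Lambda n. \<Prod>i<n. (xs ! i) ^ 2)"
    by (simp add: Lambda_eq_lambda_seqs sum_lambda_seqs)
  finally show ?thesis .
qed

end
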